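(* Let $G$ be a group, $F$ a field of characteristic $0$, and let $R=M_n(F)$ carry the elementary $G$-grading induced by an $n$-tuple $(g_1,\dots,g_n)$ of pairwise distinct elements of $G$. For $h\in\mathrm{supp}(R)$ put $M_h=\sum_{g_k^{-1}g_l=h}e_{kl}$. Let $h_1,\dots,h_k\in\mathrm{supp}(R)$ with $h_1h_2\cdots h_k=1_G$. Then the matrices $M_{h_1}M_{h_2}\cdots M_{h_k}$ and $M_{h_2}\cdots M_{h_k}$ have the same number of nonzero rows.
   Context: The elementary $G$-grading on $M_n(F)$ induced by $(g_1,\dots,g_n)\in G^n$ is $R=\bigoplus_{g\in G}R_g$ with $R_g=\mathrm{span}\{e_{pq}: g_p^{-1}g_q=g\}$, where $e_{pq}$ are the matrix units. The support is $\mathrm{supp}(R)=\{g\in G: R_g\neq 0\}$. *)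

theory Defs
  imports "HOL-Algebra.Group" "Jordan_Normal_Form.Matrix"
begin

definition elem_supp :: "('g, 'b) monoid_scheme \<Rightarrow> nat \<Rightarrow> (nat \<Rightarrow> 'g) \<Rightarrow> 'g set" where
  "elem_supp G n g = {h. \<exists>p<n. \<exists>q<n. inv\<^bsub>G\<^esub> (g p) \<otimes>\<^bsub>G\<^esub> g q = h}"

definition grade_mat :: "('g, 'b) monoid_scheme \<Rightarrow> nat \<Rightarrow> (nat \<Rightarrow> 'g) \<Rightarrow> 'g \<Rightarrow> 'a::field mat" where
  "grade_mat G n g h = mat n n (\<lambda>(p, q). if inv\<^bsub>G\<^esub> (g p) \<otimes>\<^bsub>G\<^esub> g q = h then 1 else 0)"

definition mat_list_prod :: "nat \<Rightarrow> 'a::field mat list \<Rightarrow> 'a mat" where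
  "mat_list_prod n As = foldr (\<lambda>A B. A * B) As (1\<^sub>m n)"

definition nonzero_rows :: "'a::field mat \<Rightarrow> nat" where
  "nonzero_rows A = card {i. i < dim_row A \<and> row A i \<noteq> 0\<^sub>v (dim_col A)}"

end

theory Submission
  imports Defs
begin

text \<open>Row i of M_h is the unit vector at the index q with g_q = g_i h, or zero if there is no
  such q. Hence a product M_{h_1} ... M_{h_k} is a partial permutation matrix, and its row i is
  nonzero iff the right walk g_i, g_i h_1, g_i h_1 h_2, ... never leaves X = {g_1, ..., g_n}.
  Right multiplication by h_1 maps the starting points of such walks for (h_1, ..., h_k)
  injectively into those for (h_2, ..., h_k); it is onto because h_1 is the inverse of
  h_2 ... h_k, so every admissible walk for (h_2, ..., h_k) can be prolonged backwards by one step.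
  Nothing depends on the characteristic of the field.\<close>

fun walk_domain :: "('g, 'b) monoid_scheme \<Rightarrow> 'g set \<Rightarrow> 'g list \<Rightarrow> 'g set" where
  "walk_domain G X [] = X"
| "walk_domain G X (h # hs) = {x \<in> X. x \<otimes>\<^bsub>G\<^esub> h \<in> walk_domain G X hs}"

context group
begin

lemma foldr_mult_closed:
  "set hs \<subseteq> carrier G \<Longrightarrow> foldr (\<lambda>x y. x \<otimes> y) hs \<one> \<in> carrier G"
  by (induction hs) auto

lemma walk_domain_subset: "walk_domain G X hs \<subseteq> X"
  by (cases hs) auto

lemma walk_domain_mult_foldr:
  assumes "X \<subseteq> carrier G" "set hs \<subseteq> carrier G" "x \<in> walk_domain G X hs"
  shows "x \<otimes> foldr (\<lambda>x y. x \<otimes> y) hs \<one> \<in> X"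
  using assms
proof (induction hs arbitrary: x)
  case Nil
  then show ?case by auto
next
  case (Cons h hs)
  then have "x \<in> carrier G" "h \<in> carrier G" by auto
  moreover have "x \<otimes> h \<otimes> foldr (\<lambda>x y. x \<otimes> y) hs \<one> \<in> X"
    using Cons by simp
  ultimately show ?case
    using Cons.prems(2) by (simp add: m_assoc foldr_mult_closed)
qed

lemma bij_betw_walk_domain_Cons:
  assumes X: "X \<subseteq> carrier G" and h: "h \<in> carrier G" and hs: "set hs \<subseteq> carrier G"
    and prod: "h \<otimes> foldr (\<lambda>x y. x \<otimes> y) hs \<one> = \<one>"
  shows "bij_betw (\<lambda>x. x \<otimes> h) (walk_domain G X (h # hs)) (walk_domain G X hs)"
proof (rule bij_betw_imageI)
  show "inj_on (\<lambda>x. x \<otimes> h) (walk_domain G X (h # hs))"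
    using X h walk_domain_subset by (intro inj_onI) (metis right_cancel subsetD)
  define P where "P = foldr (\<lambda>x y. x \<otimes> y) hs \<one>"
  have P: "P \<in> carrier G" "P \<otimes> h = \<one>"
    unfolding P_def using foldr_mult_closed[OF hs] inv_comm[OF prod] h by auto
  have "y \<in> (\<lambda>x. x \<otimes> h) ` walk_domain G X (h # hs)" if y: "y \<in> walk_domain G X hs" for y
  proof
    have "y \<in> carrier G" using y walk_domain_subset X by blast
    then show "y = y \<otimes> P \<otimes> h" using P h by (simp add: m_assoc)
    show "y \<otimes> P \<in> walk_domain G X (h # hs)"
      using walk_domain_mult_foldr[OF X hs y] \<open>y = y \<otimes> P \<otimes> h\<close> y by (simp add: P_def)
  qed
  then show "(\<lambda>x. x \<otimes> h) ` walk_domain G X (h # hs) = walk_domain G X hs" by auto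
qed

end

locale elementary_grading = group +
  fixes n :: nat and g :: "nat \<Rightarrow> 'a"
  assumes g_closed: "\<And>i. i < n \<Longrightarrow> g i \<in> carrier G"
    and g_inj: "inj_on g {..<n}"
begin

lemma elem_supp_subset_carrier: "elem_supp G n g \<subseteq> carrier G"
  unfolding elem_supp_def using g_closed by auto

lemma grade_mat_carrier: "grade_mat G n g h \<in> carrier_mat n n"
  by (simp add: grade_mat_def)

lemma mat_list_prod_carrier: "mat_list_prod n (map (grade_mat G n g) hs) \<in> carrier_mat n n"
  unfolding mat_list_prod_def by (induction hs) (auto intro!: mult_carrier_mat grade_mat_carrier)

lemma grade_mat_entry_iff:
  assumes "i < n" "q < n" "h \<in> carrier G"
  shows "inv (g i) \<otimes> g q = h \<longleftrightarrow> g q = g i \<otimes> h"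
  using assms g_closed by (metis inv_solve_left' inv_closed m_closed)

lemma row_grade_mat:
  assumes "i < n" "q < n" "h \<in> carrier G" "g q = g i \<otimes> h"
  shows "row (grade_mat G n g h :: 'k::field mat) i = unit_vec n q"
proof (rule eq_vecI)
  fix p assume "p < dim_vec (unit_vec n q :: 'k vec)"
  then have "p < n" by simp
  have "g p = g i \<otimes> h \<longleftrightarrow> p = q"
    using assms \<open>p < n\<close> g_inj by (metis inj_onD lessThan_iff)
  then show "row (grade_mat G n g h) i $ p = (unit_vec n q :: 'k vec) $ p"
    using assms \<open>p < n\<close> grade_mat_entry_iff by (simp add: grade_mat_def unit_vec_def)
qed (simp add: grade_mat_def)

lemma row_grade_mat_zero:
  assumes "i < n" "h \<in> carrier G" "g i \<otimes> h \<notin> g ` {..<n}"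
  shows "row (grade_mat G n g h :: 'k::field mat) i = 0\<^sub>v n"
  using assms grade_mat_entry_iff by (intro eq_vecI) (force simp: grade_mat_def)+

lemma row_grade_mat_mult:
  assumes "i < n" "q < n" "h \<in> carrier G" "g q = g i \<otimes> h" "(Q :: 'k::field mat) \<in> carrier_mat n n"
  shows "row (grade_mat G n g h * Q) i = row Q q"
proof -
  have "row (grade_mat G n g h * Q) i = vec n (\<lambda>j. unit_vec n q \<bullet> col Q j)"
    by (subst row_mult[OF grade_mat_carrier assms(5,1)]) (simp add: row_grade_mat[OF assms(1-4)])
  also have "\<dots> = row Q q"
    using assms by (intro eq_vecI) auto
  finally show ?thesis .
qed

lemma row_grade_mat_mult_zero:
  assumes "i < n" "h \<in> carrier G" "g i \<otimes> h \<notin> g ` {..<n}" "(Q :: 'k::field mat) \<in> carrier_mat n n"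
  shows "row (grade_mat G n g h * Q) i = 0\<^sub>v n"
proof -
  have "row (grade_mat G n g h * Q) i = vec n (\<lambda>j. 0\<^sub>v n \<bullet> col Q j)"
    by (subst row_mult[OF grade_mat_carrier assms(4,1)]) (simp add: row_grade_mat_zero[OF assms(1-3)])
  also have "\<dots> = 0\<^sub>v n"
    using assms by (intro eq_vecI) auto
  finally show ?thesis .
qed

lemma row_mat_list_prod_nonzero_iff:
  assumes "i < n" "set hs \<subseteq> carrier G"
  shows "row (mat_list_prod n (map (grade_mat G n g) hs) :: 'k::field mat) i \<noteq> 0\<^sub>v n
    \<longleftrightarrow> g i \<in> walk_domain G (g ` {..<n}) hs"
  using assms
proof (induction hs arbitrary: i)
  case Nil
  then show ?case by (simp add: mat_list_prod_def)
next
  case (Cons h hs)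
  let ?Q = "mat_list_prod n (map (grade_mat G n g) hs) :: 'k mat"
  have prod: "mat_list_prod n (map (grade_mat G n g) (h # hs)) = grade_mat G n g h * ?Q"
    by (simp add: mat_list_prod_def)
  have h: "h \<in> carrier G" and hs: "set hs \<subseteq> carrier G" using Cons.prems by auto
  show ?case
  proof (cases "g i \<otimes> h \<in> g ` {..<n}")
    case True
    then obtain q where q: "q < n" "g q = g i \<otimes> h" by force
    have "row (grade_mat G n g h * ?Q) i = row ?Q q"
      using row_grade_mat_mult[OF Cons.prems(1) q(1) h q(2) mat_list_prod_carrier] .
    moreover have "g i \<in> walk_domain G (g ` {..<n}) (h # hs) \<longleftrightarrow> g q \<in> walk_domain G (g ` {..<n}) hs"
      using Cons.prems(1) q(2) by auto
    ultimately show ?thesis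
      using Cons.IH[OF q(1) hs] by (simp only: prod)
  next
    case False
    then have "g i \<notin> walk_domain G (g ` {..<n}) (h # hs)"
      using walk_domain_subset by auto
    then show ?thesis
      using row_grade_mat_mult_zero[OF Cons.prems(1) h False mat_list_prod_carrier] by (simp only: prod) simp
  qed
qed

lemma nonzero_rows_mat_list_prod:
  assumes "set hs \<subseteq> carrier G"
  shows "nonzero_rows (mat_list_prod n (map (grade_mat G n g) hs) :: 'k::field mat)
    = card (walk_domain G (g ` {..<n}) hs)"
proof -
  have "{i. i < n \<and> row (mat_list_prod n (map (grade_mat G n g) hs) :: 'k mat) i \<noteq> 0\<^sub>v n}
      = {i. i < n \<and> g i \<in> walk_domain G (g ` {..<n}) hs}"
    using row_mat_list_prod_nonzero_iff[OF _ assms] by blast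
  also have "card \<dots> = card (walk_domain G (g ` {..<n}) hs)"
    using walk_domain_subset[of "g ` {..<n}" hs] g_inj
    by (intro bij_betw_same_card[of g]) (auto simp: bij_betw_def inj_on_def image_iff)
  finally show ?thesis
    by (simp add: nonzero_rows_def carrier_matD[OF mat_list_prod_carrier])
qed

end

theorem mainTheorem2:
  fixes G :: "('g, 'b) monoid_scheme" and n :: nat and g :: "nat \<Rightarrow> 'g"
    and h1 :: 'g and hs :: "'g list"
  assumes "group G"
    and "\<And>i. i < n \<Longrightarrow> g i \<in> carrier G"
    and "inj_on g {..<n}"
    and "h1 \<in> elem_supp G n g"
    and "set hs \<subseteq> elem_supp G n g"
    and "foldr (\<lambda>x y. x \<otimes>\<^bsub>G\<^esub> y) (h1 # hs) \<one>\<^bsub>G\<^esub> = \<one>\<^bsub>G\<^esub>"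
  shows "nonzero_rows (mat_list_prod n (map (grade_mat G n g) (h1 # hs)) :: 'a::field_char_0 mat)
       = nonzero_rows (mat_list_prod n (map (grade_mat G n g) hs) :: 'a mat)"
proof -
  interpret elementary_grading G n g
    using assms(1-3) by (intro elementary_grading.intro elementary_grading_axioms.intro) auto
  have h1: "h1 \<in> carrier G" and hs: "set hs \<subseteq> carrier G"
    using assms(4,5) elem_supp_subset_carrier by auto
  then have h1_hs: "set (h1 # hs) \<subseteq> carrier G" by simp
  have X: "g ` {..<n} \<subseteq> carrier G" using assms(2) by auto
  have prod: "h1 \<otimes>\<^bsub>G\<^esub> foldr (\<lambda>x y. x \<otimes>\<^bsub>G\<^esub> y) hs \<one>\<^bsub>G\<^esub> = \<one>\<^bsub>G\<^esub>"
    using assms(6) by simp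
  show ?thesis
    unfolding nonzero_rows_mat_list_prod[OF h1_hs] nonzero_rows_mat_list_prod[OF hs]
    by (rule bij_betw_same_card[OF bij_betw_walk_domain_Cons[OF X h1 hs prod]])
qed

end
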